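(* Let $d\ge 1$ and let $Q=\bigcap_{i=1}^{k}\{x\in\mathbb{R}^d:\langle u_i,x\rangle\le b_i\}$ be a convex polytope whose facets have the $k$ pairwise distinct outward unit normals $u_1,\dots,u_k$. Let $P\subset\mathbb{R}^d$ be a finite set of $n\ge 1$ points. Then there exists $p\in P$ such that $p\in M$ for every homothet $M$ of $Q$ with $|M\cap P|>(1-\frac{1}{k})n$.
   Context: A homothet of $Q$ is a set of the form $\lambda Q+t=\{\lambda x+t: x\in Q\}$ with $\lambda>0$ and $t\in\mathbb{R}^d$. *)

theory Defs
  imports "HOL-Analysis.Analysis"
begin

definition homothet :: "real \<Rightarrow> 'a::real_vector \<Rightarrow> 'a set \<Rightarrow> 'a set" where
  "homothet lam t Q = (\<lambda>x. lam *\<^sub>R x + t) ` Q"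

end

theory Submission
  imports Defs
begin

text \<open>For each normal \<open>u\<^sub>i\<close> take the least threshold \<open>c\<^sub>i\<close> such that the halfspace
  \<open>u\<^sub>i \<bullet> x \<le> c\<^sub>i\<close> contains more than \<open>(1 - 1/k) n\<close> points of \<open>P\<close>. Each of the \<open>k\<close>
  complementary open halfspaces then contains fewer than \<open>n/k\<close> points, so some \<open>p \<in> P\<close>
  lies in all \<open>k\<close> minimal halfspaces. A homothet of \<open>Q\<close> is the intersection of \<open>k\<close>
  halfspaces with the same normals, and if it contains more than \<open>(1 - 1/k) n\<close> points,
  each of these halfspaces does, hence contains the corresponding minimal one and so \<open>p\<close>.\<close>

lemma least_heavy_threshold:
  fixes f :: "'a \<Rightarrow> real"
  assumes "finite P" "0 \<le> \<alpha>" "\<alpha> < real (card P)"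
  obtains c where "real (card {p\<in>P. c < f p}) < real (card P) - \<alpha>"
    and "\<And>c'. \<alpha> < real (card {p\<in>P. f p \<le> c'}) \<Longrightarrow> c \<le> c'"
proof -
  define heavy where "heavy c \<longleftrightarrow> \<alpha> < real (card {p\<in>P. f p \<le> c})" for c
  have attained: "\<exists>q\<in>P. f q \<le> c \<and> heavy (f q)" if "heavy c" for c
  proof -
    define T where "T = {p\<in>P. f p \<le> c}"
    have "finite T"
      using \<open>finite P\<close> by (simp add: T_def)
    moreover have "T \<noteq> {}"
      using \<open>0 \<le> \<alpha>\<close> that unfolding T_def heavy_def by (metis card.empty of_nat_0 not_less)
    ultimately have "Max (f ` T) \<in> f ` T"
      by simp
    then obtain q where q: "q \<in> T" "f q = Max (f ` T)"
      by auto
    have "{p\<in>P. f p \<le> f q} = T"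
      using q \<open>finite T\<close> by (auto simp: T_def)
    then have "heavy (f q)"
      using that by (simp add: T_def heavy_def)
    moreover have "q \<in> P" "f q \<le> c"
      using q(1) by (simp_all add: T_def)
    ultimately show ?thesis
      by blast
  qed
  define H where "H = {v\<in>f ` P. heavy v}"
  have "{p\<in>P. f p \<le> Max (f ` P)} = P"
    using \<open>finite P\<close> by auto
  then have "heavy (Max (f ` P))"
    using assms by (simp add: heavy_def)
  then have "H \<noteq> {}" "finite H"
    using attained \<open>finite P\<close> by (auto simp: H_def)
  define c where "c = Min H"
  have "heavy c"
    using Min_in[OF \<open>finite H\<close> \<open>H \<noteq> {}\<close>] by (simp add: c_def H_def)
  have "{p\<in>P. c < f p} = P - {p\<in>P. f p \<le> c}"
    by auto
  then have "real (card {p\<in>P. c < f p}) = real (card P) - real (card {p\<in>P. f p \<le> c})"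
    using \<open>finite P\<close> by (simp add: card_Diff_subset card_mono)
  then have "real (card {p\<in>P. c < f p}) < real (card P) - \<alpha>"
    using \<open>heavy c\<close> by (simp add: heavy_def)
  moreover have "c \<le> c'" if heavy_c': "heavy c'" for c'
  proof -
    obtain q where "q \<in> P" "f q \<le> c'" "heavy (f q)"
      using attained[OF heavy_c'] by blast
    then have "c \<le> f q"
      using \<open>finite H\<close> by (simp add: c_def H_def)
    with \<open>f q \<le> c'\<close> show ?thesis
      by simp
  qed
  ultimately show thesis
    using that by (auto simp: heavy_def)
qed

lemma exists_outside_small_subsets:
  assumes "finite I" "\<And>i. i \<in> I \<Longrightarrow> B i \<subseteq> P" "(\<Sum>i\<in>I. card (B i)) < card P"
  shows "\<exists>p\<in>P. \<forall>i\<in>I. p \<notin> B i"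
proof (rule ccontr)
  assume "\<not> (\<exists>p\<in>P. \<forall>i\<in>I. p \<notin> B i)"
  then have "P = (\<Union>i\<in>I. B i)"
    using assms(2) by blast
  then have "card P \<le> (\<Sum>i\<in>I. card (B i))"
    using card_UN_le[OF \<open>finite I\<close>] by simp
  with assms(3) show False
    by simp
qed

lemma exists_point_below_all_heavy_thresholds:
  fixes f :: "'i \<Rightarrow> 'a \<Rightarrow> real"
  assumes "finite P" "P \<noteq> {}" "finite I" "0 \<le> \<alpha>"
    and "real (card I) * (real (card P) - \<alpha>) \<le> real (card P)"
  shows "\<exists>p\<in>P. \<forall>i\<in>I. \<forall>c. \<alpha> < real (card {q\<in>P. f i q \<le> c}) \<longrightarrow> f i p \<le> c"
proof (cases "\<alpha> < real (card P)")
  case False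
  have "real (card {q\<in>P. f i q \<le> c}) \<le> \<alpha>" for i c
    using False card_mono[OF \<open>finite P\<close>, of "{q\<in>P. f i q \<le> c}"] by fastforce
  then show ?thesis
    using \<open>P \<noteq> {}\<close> by (meson ex_in_conv not_less)
next
  case True
  have "\<exists>c. real (card {q\<in>P. c < f i q}) < real (card P) - \<alpha> \<and>
      (\<forall>c'. \<alpha> < real (card {q\<in>P. f i q \<le> c'}) \<longrightarrow> c \<le> c')" for i
    by (rule least_heavy_threshold[OF \<open>finite P\<close> \<open>0 \<le> \<alpha>\<close> True, of "f i"]) blast
  then obtain c where light: "\<And>i. real (card {q\<in>P. c i < f i q}) < real (card P) - \<alpha>"
    and least: "\<And>i c'. \<alpha> < real (card {q\<in>P. f i q \<le> c'}) \<Longrightarrow> c i \<le> c'"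
    by metis
  define B where "B i = {q\<in>P. c i < f i q}" for i
  have "(\<Sum>i\<in>I. card (B i)) < card P"
  proof (cases "I = {}")
    case False
    have "real (\<Sum>i\<in>I. card (B i)) < (\<Sum>i\<in>I. real (card P) - \<alpha>)"
      unfolding of_nat_sum B_def using \<open>finite I\<close> False light by (intro sum_strict_mono) auto
    also have "\<dots> \<le> real (card P)"
      using assms(5) by simp
    finally show ?thesis
      by linarith
  qed (use \<open>P \<noteq> {}\<close> \<open>finite P\<close> in \<open>simp add: card_gt_0_iff\<close>)
  then obtain p where "p \<in> P" "\<forall>i\<in>I. p \<notin> B i"
    using exists_outside_small_subsets[OF \<open>finite I\<close>, of B P] by (auto simp: B_def)
  have "f i p \<le> c'" if "i \<in> I" "\<alpha> < real (card {q\<in>P. f i q \<le> c'})" for i c'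
    using least[OF that(2)] \<open>p \<in> P\<close> \<open>\<forall>i\<in>I. p \<notin> B i\<close> that(1) by (auto simp: B_def)
  with \<open>p \<in> P\<close> show ?thesis
    by blast
qed

lemma homothet_halfspaces:
  fixes u :: "'i \<Rightarrow> 'a::real_inner"
  assumes "lam > 0"
  shows "homothet lam t (\<Inter>i\<in>I. {x. u i \<bullet> x \<le> b i})
    = (\<Inter>i\<in>I. {y. u i \<bullet> y \<le> lam * b i + u i \<bullet> t})"
proof
  show "homothet lam t (\<Inter>i\<in>I. {x. u i \<bullet> x \<le> b i})
      \<subseteq> (\<Inter>i\<in>I. {y. u i \<bullet> y \<le> lam * b i + u i \<bullet> t})"
    using assms by (auto simp: homothet_def inner_add_right)
next
  show "(\<Inter>i\<in>I. {y. u i \<bullet> y \<le> lam * b i + u i \<bullet> t})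
      \<subseteq> homothet lam t (\<Inter>i\<in>I. {x. u i \<bullet> x \<le> b i})"
  proof
    fix y assume y: "y \<in> (\<Inter>i\<in>I. {y. u i \<bullet> y \<le> lam * b i + u i \<bullet> t})"
    define x where "x = inverse lam *\<^sub>R (y - t)"
    have "y = lam *\<^sub>R x + t"
      using assms by (simp add: x_def)
    moreover have "u i \<bullet> x \<le> b i" if "i \<in> I" for i
    proof -
      have "lam * (u i \<bullet> x) \<le> lam * b i"
        using y that \<open>y = lam *\<^sub>R x + t\<close> by (auto simp: inner_add_right)
      then show ?thesis
        using assms by simp
    qed
    ultimately show "y \<in> homothet lam t (\<Inter>i\<in>I. {x. u i \<bullet> x \<le> b i})"
      unfolding homothet_def by blast
  qed
qed

theorem corollary4:
  fixes Q :: "'a::euclidean_space set"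
    and u :: "nat \<Rightarrow> 'a" and b :: "nat \<Rightarrow> real"
    and k :: nat and P :: "'a set" and n :: nat
  assumes Qpoly: "polytope Q"
    and Qint: "interior Q \<noteq> {}"
    and Qeq: "Q = (\<Inter>i\<in>{..<k}. {x. u i \<bullet> x \<le> b i})"
    and unit: "\<And>i. i < k \<Longrightarrow> norm (u i) = 1"
    and distinct: "inj_on u {..<k}"
    and facets: "{F. F facet_of Q} = (\<lambda>i. Q \<inter> {x. u i \<bullet> x = b i}) ` {..<k}"
    and Pfin: "finite P" and Pcard: "card P = n" and npos: "n \<ge> 1"
  shows "\<exists>p\<in>P. \<forall>lam t. lam > 0 \<and>
            real (card (homothet lam t Q \<inter> P)) > (1 - 1 / real k) * real n
            \<longrightarrow> p \<in> homothet lam t Q"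
proof -
  \<comment> \<open>Only the halfspace description \<open>Qeq\<close> is needed. For \<open>k = 0\<close> the threshold is \<open>n\<close>
    (as \<open>1 / 0 = 0\<close>), so the claim is vacuous and the general lemma still applies.\<close>
  define \<alpha> where "\<alpha> = (1 - 1 / real k) * real n"
  have "0 \<le> \<alpha>"
    by (cases "k = 0") (simp_all add: \<alpha>_def field_simps mult_le_cancel_right1)
  moreover have "real (card {..<k}) * (real (card P) - \<alpha>) \<le> real (card P)"
    by (cases "k = 0") (simp_all add: \<alpha>_def Pcard field_simps)
  moreover have "P \<noteq> {}"
    using Pcard npos by auto
  ultimately have "\<exists>p\<in>P. \<forall>i\<in>{..<k}. \<forall>c.
      \<alpha> < real (card {q\<in>P. u i \<bullet> q \<le> c}) \<longrightarrow> u i \<bullet> p \<le> c"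
    by (intro exists_point_below_all_heavy_thresholds) (simp_all add: Pfin)
  then obtain p where "p \<in> P" and p:
    "\<And>i c. i < k \<Longrightarrow> \<alpha> < real (card {q\<in>P. u i \<bullet> q \<le> c}) \<Longrightarrow> u i \<bullet> p \<le> c"
    by auto
  have "p \<in> homothet lam t Q" if "lam > 0" and heavy: "\<alpha> < real (card (homothet lam t Q \<inter> P))" for lam t
  proof -
    have M: "homothet lam t Q = (\<Inter>i\<in>{..<k}. {y. u i \<bullet> y \<le> lam * b i + u i \<bullet> t})"
      unfolding Qeq using \<open>lam > 0\<close> by (rule homothet_halfspaces)
    have "u i \<bullet> p \<le> lam * b i + u i \<bullet> t" if "i < k" for i
    proof (rule p[OF that], rule less_le_trans[OF heavy])
      show "real (card (homothet lam t Q \<inter> P)) \<le> real (card {q\<in>P. u i \<bullet> q \<le> lam * b i + u i \<bullet> t})"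
        using that Pfin by (auto simp: M intro!: card_mono)
    qed
    then show ?thesis
      by (simp add: M)
  qed
  with \<open>p \<in> P\<close> show ?thesis
    unfolding \<alpha>_def by blast
qed

end
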